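(* Let $\Omega=\{z\in\mathbb{C}:|z|=1\}$, $\psi\in\mathbb{C}$ with $|\psi|<1$, and let $(Z_U,Z_V)$ be a random vector on $\Omega\times\Omega$ with density $$c(z_u,z_v)=\frac{1}{4\pi^2}\,\frac{1-|\psi|^2}{|1-\psi z_v\overline{z_u}|^2},\qquad z_u,z_v\in\Omega.$$ Let $g_1,g_2$ be one-to-one mappings defined on $\Omega$ and differentiable on $\Omega$. Then $g_1(Z_U)$ and $g_2(Z_V)$ are independent if and only if $\psi=0$.
   Context: The density is with respect to arc-length measure on each circle. This distribution is denoted $BC_+(\psi)$. *)

theory Defs
  imports "HOL-Probability.Probability"
begin

definition unit_circle :: "complex set" where
  "unit_circle = {z. cmod z = 1}"

definition arc_measure :: "complex measure" where
  "arc_measure = distr (restrict_space lborel {0..<2*pi}) borel cis"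

text \<open>The density of BC+(psi) w.r.t. arc-length on each circle.\<close>
definition bc_density :: "complex \<Rightarrow> complex \<Rightarrow> complex \<Rightarrow> real" where
  "bc_density \<psi> zu zv =
     (1 / (4 * pi^2)) * (1 - (cmod \<psi>)^2) / (cmod (1 - \<psi> * zv * cnj zu))^2"

end

theory Submission
  imports Defs "HOL-Complex_Analysis.Cauchy_Integral_Formula"
begin

text \<open>Integrating the density of \<open>BC\<^sub>+(\<psi>)\<close> in one variable is a Poisson integral of the
  constant function 1 (Cauchy's integral formula), so both marginals are uniform with density
  \<open>1/(2\<pi>)\<close>. The maps \<open>g\<^sub>1, g\<^sub>2\<close> are continuous injections of the compact circle and therefore
  have Borel left inverses, so \<open>g\<^sub>1(Z\<^sub>U)\<close> and \<open>g\<^sub>2(Z\<^sub>V)\<close> are independent iff \<open>Z\<^sub>U\<close> and \<open>Z\<^sub>V\<close> are,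
  i.e. iff the joint density is almost everywhere the product \<open>1/(4\<pi>\<^sup>2)\<close> of the marginals. For
  \<open>\<psi> \<noteq> 0\<close> the density attains that value at no more than two points of each circle slice.\<close>

lemma (in prob_space) indep_var_cong_sets:
  assumes "sets S = sets S'" "sets T = sets T'"
  shows "indep_var S X T Y \<longleftrightarrow> indep_var S' X T' Y"
  unfolding indep_var_eq assms measurable_cong_sets[OF refl assms(1)]
    measurable_cong_sets[OF refl assms(2)] ..

lemma (in prob_space) indep_var_cong:
  assumes "\<And>\<omega>. \<omega> \<in> space M \<Longrightarrow> X \<omega> = X' \<omega>" "\<And>\<omega>. \<omega> \<in> space M \<Longrightarrow> Y \<omega> = Y' \<omega>"
  shows "indep_var S X T Y \<longleftrightarrow> indep_var S X' T Y'"
proof -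
  have "X -` A \<inter> space M = X' -` A \<inter> space M" "Y -` A \<inter> space M = Y' -` A \<inter> space M" for A
    using assms by auto
  moreover have "X \<in> M \<rightarrow>\<^sub>M S \<longleftrightarrow> X' \<in> M \<rightarrow>\<^sub>M S" "Y \<in> M \<rightarrow>\<^sub>M T \<longleftrightarrow> Y' \<in> M \<rightarrow>\<^sub>M T"
    using assms by (simp_all cong: measurable_cong)
  ultimately show ?thesis unfolding indep_var_eq by simp
qed

lemma borel_measurable_continuous_on_compact_extension:
  fixes f :: "'a::t2_space \<Rightarrow> 'b::topological_space"
  assumes "compact K" "continuous_on K f"
  shows "(\<lambda>x. if x \<in> K then f x else c) \<in> borel_measurable borel"
  using assms
  by (intro borel_measurable_continuous_on_if borel_closed compact_imp_closed continuous_on_const)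

lemma borel_measurable_inverse_on_compact:
  fixes f :: "'a::t2_space \<Rightarrow> 'b::t2_space"
  assumes "compact K" "continuous_on K f" "inj_on f K"
  obtains h where "h \<in> borel_measurable borel" "\<And>x. x \<in> K \<Longrightarrow> h (f x) = x"
proof
  have "continuous_on (f ` K) (inv_into K f)"
    using assms by (intro continuous_on_inv) auto
  moreover have "compact (f ` K)" using assms by (intro compact_continuous_image)
  ultimately show "(\<lambda>y. if y \<in> f ` K then inv_into K f y else undefined) \<in> borel_measurable borel"
    by (rule borel_measurable_continuous_on_compact_extension[rotated])
  show "(if f x \<in> f ` K then inv_into K f (f x) else undefined) = x" if "x \<in> K" for x
    using assms(3) that by simp
qed

lemma (in prob_space) indep_var_continuous_inj_on_compact_iff:
  fixes X Y :: "'a \<Rightarrow> 'c::t2_space" and f g :: "'c \<Rightarrow> 'd::t2_space"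
  assumes "compact K" "compact L" "\<And>\<omega>. \<omega> \<in> space M \<Longrightarrow> X \<omega> \<in> K \<and> Y \<omega> \<in> L"
    and "continuous_on K f" "inj_on f K" "continuous_on L g" "inj_on g L"
  shows "indep_var borel (\<lambda>\<omega>. f (X \<omega>)) borel (\<lambda>\<omega>. g (Y \<omega>)) \<longleftrightarrow> indep_var borel X borel Y"
proof
  assume "indep_var borel (\<lambda>\<omega>. f (X \<omega>)) borel (\<lambda>\<omega>. g (Y \<omega>))"
  moreover obtain h where "h \<in> borel_measurable borel" and hf: "\<And>x. x \<in> K \<Longrightarrow> h (f x) = x"
    using borel_measurable_inverse_on_compact assms(1,4,5) by blast
  moreover obtain k where "k \<in> borel_measurable borel" and kg: "\<And>y. y \<in> L \<Longrightarrow> k (g y) = y"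
    using borel_measurable_inverse_on_compact assms(2,6,7) by blast
  ultimately have "indep_var borel (h \<circ> (\<lambda>\<omega>. f (X \<omega>))) borel (k \<circ> (\<lambda>\<omega>. g (Y \<omega>)))"
    by (intro indep_var_compose) auto
  then show "indep_var borel X borel Y"
    by (rule indep_var_cong[THEN iffD1, rotated -1]) (simp_all add: assms(3) hf kg)
next
  assume "indep_var borel X borel Y"
  then have "indep_var borel ((\<lambda>x. if x \<in> K then f x else undefined) \<circ> X)
      borel ((\<lambda>y. if y \<in> L then g y else undefined) \<circ> Y)"
    by (rule indep_var_compose[OF _ borel_measurable_continuous_on_compact_extension
          borel_measurable_continuous_on_compact_extension]) (use assms in auto)
  then show "indep_var borel (\<lambda>\<omega>. f (X \<omega>)) borel (\<lambda>\<omega>. g (Y \<omega>))"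
    by (rule indep_var_cong[THEN iffD1, rotated -1]) (simp_all add: assms(3))
qed

lemma (in prob_space) indep_var_iff_joint_density:
  assumes S: "sigma_finite_measure S" and T: "sigma_finite_measure T"
    and X: "distributed M S X Px" and Y: "distributed M T Y Py"
    and XY: "distributed M (S \<Otimes>\<^sub>M T) (\<lambda>\<omega>. (X \<omega>, Y \<omega>)) Pxy"
  shows "indep_var S X T Y \<longleftrightarrow> (AE p in S \<Otimes>\<^sub>M T. Pxy p = Px (fst p) * Py (snd p))"
proof
  assume "indep_var S X T Y"
  from distributed_unique[OF XY distributed_joint_indep[OF S T X Y this]]
  show "AE p in S \<Otimes>\<^sub>M T. Pxy p = Px (fst p) * Py (snd p)" by (simp add: case_prod_beta)
next
  assume "AE p in S \<Otimes>\<^sub>M T. Pxy p = Px (fst p) * Py (snd p)"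
  then have "distributed M (S \<Otimes>\<^sub>M T) (\<lambda>\<omega>. (X \<omega>, Y \<omega>)) (\<lambda>(x, y). Px x * Py y)"
    using XY X Y
    by (subst distributed_cong_density[symmetric])
      (auto simp: case_prod_beta dest: distributed_borel_measurable)
  moreover interpret DY: prob_space "density T Py"
    using Y by (simp add: distributed_distr_eq_density[symmetric] prob_space_distr distributed_measurable)
  have "distr M S X \<Otimes>\<^sub>M distr M T Y = density (S \<Otimes>\<^sub>M T) (\<lambda>(x, y). Px x * Py y)"
    using X Y T DY.sigma_finite_measure
    by (simp add: distributed_distr_eq_density pair_measure_density distributed_borel_measurable)
  ultimately show "indep_var S X T Y"
    using X Y
    by (simp add: indep_var_distribution_eq distributed_distr_eq_density distributed_measurable)
qed

definition poisson_kernel :: "complex \<Rightarrow> complex \<Rightarrow> real" where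
  "poisson_kernel a z = (1 - (cmod a)^2) / (cmod (1 - a * z))^2"

lemma one_minus_mult_neq_zero:
  fixes a u :: complex
  assumes "cmod a < 1" "cmod u \<le> 1"
  shows "1 - a * u \<noteq> 0"
proof
  assume "1 - a * u = 0"
  then have "cmod a * cmod u = 1" by (metis right_minus_eq norm_mult norm_one)
  moreover have "cmod a * cmod u \<le> cmod a" using assms(2) by (simp add: mult_left_le)
  ultimately show False using assms(1) by simp
qed

lemma poisson_kernel_cis_has_integral:
  assumes a: "cmod a < 1"
  shows "((\<lambda>t. poisson_kernel a (cis t)) has_integral 2 * pi) {0..2*pi}"
proof -
  define F where "F = (\<lambda>u. complex_of_real (1 - (cmod a)^2) / (1 - a * u))"
  have nz: "1 - a * u \<noteq> 0" if "cmod u \<le> 1" for u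
    using one_minus_mult_neq_zero[OF a that] .
  have "continuous_on (cball 0 1) F" "F holomorphic_on ball 0 1"
    unfolding F_def using nz by (auto intro!: continuous_intros holomorphic_intros)
  then have "((\<lambda>u. F u / (u - cnj a)) has_contour_integral (2 * of_real pi * \<i> * F (cnj a)))
      (circlepath 0 1)"
    by (intro Cauchy_integral_circlepath) (simp_all add: a)
  moreover have "F (cnj a) = 1"
  proof -
    have "(cmod a)^2 < 1" using a by (simp add: abs_square_less_1)
    then have "complex_of_real (1 - (cmod a)^2) \<noteq> 0" by (simp only: of_real_eq_0_iff)
    moreover have "a * cnj a = complex_of_real ((cmod a)^2)" by (metis complex_norm_square)
    then have "1 - a * cnj a = complex_of_real (1 - (cmod a)^2)" by simp
    ultimately show ?thesis unfolding F_def by simp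
  qed
  ultimately have "((\<lambda>t. F (cis t) / (cis t - cnj a) * \<i> * cis t) has_integral 2 * pi * \<i>) {0..2*pi}"
    unfolding circlepath_def by (subst (asm) has_contour_integral_part_circlepath_iff) auto
  \<comment> \<open>on the circle \<open>z - cnj a = z * cnj (1 - a z)\<close>, which turns the Cauchy integrand into
    \<open>\<i>\<close> times the kernel\<close>
  moreover have "F (cis t) / (cis t - cnj a) * \<i> * cis t
      = \<i> * complex_of_real (poisson_kernel a (cis t))" for t
  proof -
    define z where "z = cis t"
    define C where "C = complex_of_real (1 - (cmod a)^2)"
    have "z * cnj z = 1" by (simp add: z_def cis_cnj cis_mult)
    then have "z - cnj a = z * cnj (1 - a * z)" by (simp add: algebra_simps)
    then have "F z / (z - cnj a) * \<i> * z = C / (1 - a * z) / (z * cnj (1 - a * z)) * \<i> * z"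
      by (simp only: F_def C_def)
    also have "\<dots> = \<i> * (C / ((1 - a * z) * cnj (1 - a * z)))"
    proof -
      have "C / P / (z * Q) * \<i> * z = \<i> * (C / (P * Q))" if "P \<noteq> 0" "Q \<noteq> 0" for P Q
        using that by (simp add: z_def field_simps)
      then show ?thesis using nz[of z] by (simp add: z_def)
    qed
    also have "\<dots> = \<i> * complex_of_real (poisson_kernel a z)"
      by (simp only: poisson_kernel_def C_def of_real_divide complex_norm_square)
    finally show ?thesis unfolding z_def .
  qed
  ultimately have
    "((\<lambda>t. \<i> * complex_of_real (poisson_kernel a (cis t))) has_integral \<i> * (2 * pi)) {0..2*pi}"
    by (simp add: mult_ac)
  then have "((\<lambda>t. complex_of_real (poisson_kernel a (cis t))) has_integral 2 * pi) {0..2*pi}"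
    by (subst (asm) has_integral_mult_right_iff) auto
  from has_integral_Re[OF this] show ?thesis by simp
qed

lemma measurable_cis_interval: "cis \<in> restrict_space lborel {0..<2*pi} \<rightarrow>\<^sub>M borel"
  by (intro measurable_restrict_space1) (simp add: borel_measurable_continuous_onI continuous_on_cis)

lemma sets_arc_measure [measurable_cong]: "sets arc_measure = sets borel"
  by (simp add: arc_measure_def)

lemma space_arc_measure: "space arc_measure = UNIV"
  by (simp add: arc_measure_def)

lemma emeasure_arc_measure:
  "A \<in> sets borel \<Longrightarrow> emeasure arc_measure A = emeasure lborel (cis -` A \<inter> {0..<2*pi})"
  unfolding arc_measure_def
  by (simp add: emeasure_distr[OF measurable_cis_interval] space_restrict_space
      emeasure_restrict_space)

lemma nn_integral_arc_measure:
  "f \<in> borel_measurable borel \<Longrightarrow>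
    (\<integral>\<^sup>+z. f z \<partial>arc_measure) = (\<integral>\<^sup>+t. f (cis t) * indicator {0..<2*pi} t \<partial>lborel)"
  unfolding arc_measure_def
  by (simp add: nn_integral_distr[OF measurable_cis_interval] nn_integral_restrict_space)

lemma emeasure_arc_measure_UNIV: "emeasure arc_measure UNIV = 2 * pi"
  by (simp add: emeasure_arc_measure)

lemma sigma_finite_measure_arc_measure: "sigma_finite_measure arc_measure"
proof -
  interpret finite_measure arc_measure
    by (rule finite_measureI) (simp add: space_arc_measure emeasure_arc_measure_UNIV)
  show ?thesis ..
qed

lemma countable_cis_vimage_singleton: "countable (cis -` {z})"
proof (cases "cis -` {z} = {}")
  case False
  then obtain t0 where t0: "cis t0 = z" by auto
  have "cis -` {z} \<subseteq> range (\<lambda>n::int. t0 + 2 * pi * of_int n)"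
  proof
    fix t assume "t \<in> cis -` {z}"
    then have "exp (\<i> * complex_of_real t) = exp (\<i> * complex_of_real t0)"
      using t0 by (simp add: cis_conv_exp)
    then obtain n :: int
      where "\<i> * complex_of_real t = \<i> * complex_of_real t0 + (of_int (2 * n) * pi) * \<i>"
      by (auto simp: exp_eq)
    then have "Im (\<i> * complex_of_real t) = Im (\<i> * complex_of_real t0 + (of_int (2 * n) * pi) * \<i>)"
      by simp
    then show "t \<in> range (\<lambda>n::int. t0 + 2 * pi * of_int n)" by auto
  qed
  then show ?thesis by (rule countable_subset) simp
qed simp

lemma emeasure_arc_measure_countable:
  assumes "countable A"
  shows "emeasure arc_measure A = 0"
proof -
  have "A \<in> sets borel" by (rule sets.countable[OF _ assms]) (simp add: borel_closed)
  moreover have "countable (cis -` A \<inter> {0..<2*pi})"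
  proof (rule countable_subset)
    show "countable (\<Union>z\<in>A. cis -` {z})"
      using assms by (intro countable_UN) (auto simp: countable_cis_vimage_singleton)
  qed auto
  ultimately show ?thesis by (simp add: emeasure_arc_measure emeasure_lborel_countable)
qed

lemma not_AE_arc_measure_countable:
  assumes "countable A"
  shows "\<not> (AE z in arc_measure. z \<in> A)"
proof
  assume "AE z in arc_measure. z \<in> A"
  moreover have "AE z in arc_measure. z \<notin> A"
    using assms by (intro AE_I[of _ _ A])
      (auto simp: emeasure_arc_measure_countable sets_arc_measure intro: sets.countable borel_closed)
  ultimately have "AE z in arc_measure. False" by eventually_elim simp
  then show False
    by (simp add: eventually_False ae_filter_eq_bot_iff space_arc_measure emeasure_arc_measure_UNIV)
qed

lemma AE_arc_measure_unit: "AE z in arc_measure. cmod z = 1"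
  unfolding arc_measure_def by (subst AE_distr_iff[OF measurable_cis_interval]) auto

lemma nn_integral_poisson_kernel_arc_measure:
  assumes a: "cmod a < 1"
  shows "(\<integral>\<^sup>+z. poisson_kernel a z \<partial>arc_measure) = 2 * pi"
proof -
  have "(\<integral>\<^sup>+z. poisson_kernel a z \<partial>arc_measure)
      = (\<integral>\<^sup>+t. ennreal (poisson_kernel a (cis t)) * indicator {0..<2*pi} t \<partial>lborel)"
    by (rule nn_integral_arc_measure) (simp add: poisson_kernel_def)
  also have "\<dots> = 2 * pi"
  proof (rule nn_integral_has_integral_lebesgue')
    show "0 \<le> poisson_kernel a (cis t)" for t
      using a by (simp add: poisson_kernel_def abs_square_less_1 less_imp_le)
    have negl: "negligible {t \<in> S - T. poisson_kernel a (cis t) \<noteq> 0}"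
      if "S - T \<subseteq> {2 * pi}" for S T :: "real set"
      using that by (intro negligible_subset[OF negligible_sing[of "2 * pi"]]) auto
    have "negligible {t \<in> {0..<2*pi} - {0..2*pi}. poisson_kernel a (cis t) \<noteq> 0}"
      "negligible {t \<in> {0..2*pi} - {0..<2*pi}. poisson_kernel a (cis t) \<noteq> 0}"
      by (rule negl, auto)+
    from has_integral_spike_set_eq[OF this] poisson_kernel_cis_has_integral[OF a]
    show "((\<lambda>t. poisson_kernel a (cis t)) has_integral 2 * pi) {0..<2*pi}" by blast
  qed
  finally show ?thesis by simp
qed

lemma bc_density_nonneg: "cmod \<psi> < 1 \<Longrightarrow> 0 \<le> bc_density \<psi> zu zv"
  by (simp add: bc_density_def abs_square_less_1 less_imp_le)

lemma bc_density_eq_poisson_kernel_left: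
  "cmod zu = 1 \<Longrightarrow> bc_density \<psi> zu zv = poisson_kernel (\<psi> * cnj zu) zv / (4 * pi^2)"
  by (simp add: bc_density_def poisson_kernel_def norm_mult mult_ac)

lemma bc_density_eq_poisson_kernel_right:
  assumes "cmod zv = 1"
  shows "bc_density \<psi> zu zv = poisson_kernel (cnj \<psi> * cnj zv) zu / (4 * pi^2)"
proof -
  have "cmod (1 - cnj \<psi> * cnj zv * zu) = cmod (1 - \<psi> * zv * cnj zu)"
    by (metis complex_cnj_cnj complex_cnj_diff complex_cnj_mult complex_cnj_one complex_mod_cnj)
  then show ?thesis using assms by (simp add: bc_density_def poisson_kernel_def norm_mult)
qed

lemma nn_integral_poisson_kernel_normalized:
  assumes "cmod a < 1"
  shows "(\<integral>\<^sup>+z. ennreal (poisson_kernel a z / (4 * pi^2)) \<partial>arc_measure) = 1 / (2 * pi)"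
proof -
  have "(\<integral>\<^sup>+z. ennreal (poisson_kernel a z / (4 * pi^2)) \<partial>arc_measure)
      = ennreal (1 / (4 * pi^2)) * (\<integral>\<^sup>+z. poisson_kernel a z \<partial>arc_measure)"
    by (subst nn_integral_cmult[symmetric])
       (auto simp: measurable_cong_sets[OF sets_arc_measure refl] poisson_kernel_def
             ennreal_mult'[symmetric] mult_ac intro!: nn_integral_cong)
  also have "\<dots> = 1 / (2 * pi)"
    using assms by (simp add: nn_integral_poisson_kernel_arc_measure ennreal_mult'[symmetric]
        power2_eq_square divide_ennreal)
  finally show ?thesis .
qed

lemma (in prob_space) distributed_bc_fst_uniform:
  assumes "cmod \<psi> < 1"
    and "distributed M (arc_measure \<Otimes>\<^sub>M arc_measure) (\<lambda>\<omega>. (ZU \<omega>, ZV \<omega>))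
           (\<lambda>(zu, zv). ennreal (bc_density \<psi> zu zv))"
  shows "distributed M arc_measure ZU (\<lambda>_. 1 / (2 * pi))"
proof -
  let ?f = "\<lambda>zu. \<integral>\<^sup>+zv. ennreal (bc_density \<psi> zu zv) \<partial>arc_measure"
  have "distributed M arc_measure ZU ?f"
    using distr_marginal1[OF sigma_finite_measure_arc_measure sigma_finite_measure_arc_measure
        assms(2)] by simp
  moreover have "AE zu in arc_measure. ?f zu = 1 / (2 * pi)"
    using AE_arc_measure_unit
  proof eventually_elim
    case (elim zu)
    have "cmod (\<psi> * cnj zu) < 1" using elim assms(1) by (simp add: norm_mult)
    then show ?case
      by (simp add: bc_density_eq_poisson_kernel_left[OF elim] nn_integral_poisson_kernel_normalized)
  qed
  ultimately show ?thesis
    by (subst distributed_cong_density[symmetric]) (auto dest: distributed_borel_measurable)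
qed

lemma (in prob_space) distributed_bc_snd_uniform:
  assumes "cmod \<psi> < 1"
    and "distributed M (arc_measure \<Otimes>\<^sub>M arc_measure) (\<lambda>\<omega>. (ZU \<omega>, ZV \<omega>))
           (\<lambda>(zu, zv). ennreal (bc_density \<psi> zu zv))"
  shows "distributed M arc_measure ZV (\<lambda>_. 1 / (2 * pi))"
proof -
  let ?f = "\<lambda>zv. \<integral>\<^sup>+zu. ennreal (bc_density \<psi> zu zv) \<partial>arc_measure"
  have "distributed M arc_measure ZV ?f"
    using distr_marginal2[OF sigma_finite_measure_arc_measure sigma_finite_measure_arc_measure
        assms(2)] by simp
  moreover have "AE zv in arc_measure. ?f zv = 1 / (2 * pi)"
    using AE_arc_measure_unit
  proof eventually_elim
    case (elim zv)
    have "cmod (cnj \<psi> * cnj zv) < 1" using elim assms(1) by (simp add: norm_mult)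
    then show ?case
      by (simp add: bc_density_eq_poisson_kernel_right[OF elim] nn_integral_poisson_kernel_normalized)
  qed
  ultimately show ?thesis
    by (subst distributed_cong_density[symmetric]) (auto dest: distributed_borel_measurable)
qed

lemma finite_poisson_kernel_eq_one:
  assumes "a \<noteq> 0"
  shows "finite {z. cmod z = 1 \<and> poisson_kernel a z = 1}"
proof -
  define r where "r = cmod a"
  define s where "s = sqrt (r^2 - r^4)"
  \<comment> \<open>for \<open>w = a z\<close>, \<open>|1 - w|\<^sup>2 = 1 - |w|\<^sup>2\<close> forces \<open>Re w = |w|\<^sup>2\<close>, leaving two candidates\<close>
  have "{z. cmod z = 1 \<and> poisson_kernel a z = 1}
      \<subseteq> (\<lambda>w. w / a) ` {Complex (r^2) s, Complex (r^2) (-s)}"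
  proof
    fix z assume "z \<in> {z. cmod z = 1 \<and> poisson_kernel a z = 1}"
    then have z1: "cmod z = 1" and "poisson_kernel a z = 1" by auto
    define w where "w = a * z"
    have "cmod w = r" using z1 by (simp add: w_def r_def norm_mult)
    then have rw: "r^2 = (Re w)^2 + (Im w)^2" by (metis cmod_power2)
    have "1 - r^2 = (cmod (1 - w))^2"
      using \<open>poisson_kernel a z = 1\<close> by (simp add: poisson_kernel_def w_def r_def divide_eq_1_iff)
    also have "\<dots> = (1 - Re w)^2 + (Im w)^2" by (simp add: cmod_power2)
    finally have re: "Re w = r^2" using rw by (simp add: power2_eq_square algebra_simps)
    then have "(Im w)^2 = r^2 - r^4" using rw by (simp add: power2_eq_square power4_eq_xxxx)
    then have "s^2 = (Im w)^2" unfolding s_def by (metis real_sqrt_pow2 zero_le_power2)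
    then have "Im w = s \<or> Im w = - s" by (metis power2_eq_iff)
    then have "w \<in> {Complex (r^2) s, Complex (r^2) (-s)}" using re by (auto simp: complex_eq_iff)
    moreover have "z = w / a" using assms by (simp add: w_def)
    ultimately show "z \<in> (\<lambda>w. w / a) ` {Complex (r^2) s, Complex (r^2) (-s)}" by blast
  qed
  then show ?thesis by (rule finite_subset) simp
qed

lemma sets_pair_arc_measure: "sets (arc_measure \<Otimes>\<^sub>M arc_measure) = sets borel"
  by (metis borel_prod sets_arc_measure sets_pair_measure_cong)

lemma borel_measurable_bc_density:
  "(\<lambda>p. bc_density \<psi> (fst p) (snd p)) \<in> borel_measurable (arc_measure \<Otimes>\<^sub>M arc_measure)"
  unfolding measurable_cong_sets[OF sets_pair_arc_measure refl] bc_density_def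
  by (intro borel_measurable_divide borel_measurable_times borel_measurable_const
      borel_measurable_continuous_onI continuous_intros)

lemma bc_density_AE_uniform_iff:
  assumes "cmod \<psi> < 1"
  shows "(AE p in arc_measure \<Otimes>\<^sub>M arc_measure. bc_density \<psi> (fst p) (snd p) = 1 / (4 * pi^2))
    \<longleftrightarrow> \<psi> = 0"
proof
  assume AE_uniform:
    "AE p in arc_measure \<Otimes>\<^sub>M arc_measure. bc_density \<psi> (fst p) (snd p) = 1 / (4 * pi^2)"
  show "\<psi> = 0"
  proof (rule ccontr)
    assume "\<psi> \<noteq> 0"
    interpret pair_sigma_finite arc_measure arc_measure
      by (simp add: pair_sigma_finite_def sigma_finite_measure_arc_measure)
    have "AE zu in arc_measure. AE zv in arc_measure. bc_density \<psi> zu zv = 1 / (4 * pi^2)"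
      using AE_uniform
      by (subst AE_pair_iff) (simp_all add: borel_measurable_eq borel_measurable_bc_density)
    then have "AE zu in arc_measure. False"
      using AE_arc_measure_unit
    proof eventually_elim
      case (elim zu)
      let ?level = "{zv. cmod zv = 1 \<and> poisson_kernel (\<psi> * cnj zu) zv = 1}"
      have "AE zv in arc_measure. zv \<in> ?level"
        using elim(1) AE_arc_measure_unit
        by eventually_elim (simp add: bc_density_eq_poisson_kernel_left[OF elim(2)])
      moreover have "countable ?level"
        using \<open>\<psi> \<noteq> 0\<close> elim(2)
        by (intro countable_finite finite_poisson_kernel_eq_one) (auto simp: complex_cnj_zero_iff)
      ultimately show False using not_AE_arc_measure_countable by blast
    qed
    then show False using not_AE_arc_measure_countable[of "{}"] by simp
  qed
qed (simp add: bc_density_def)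

lemma compact_unit_circle: "compact unit_circle"
proof -
  have "unit_circle = sphere 0 1" by (auto simp: unit_circle_def)
  then show ?thesis by (metis compact_sphere)
qed

theorem theorem5:
  fixes M :: "'a measure"
    and ZU ZV :: "'a \<Rightarrow> complex"
    and \<psi> :: complex
    and g1 :: "complex \<Rightarrow> 'b::euclidean_space"
    and g2 :: "complex \<Rightarrow> 'b"
  assumes "prob_space M"
    and "cmod \<psi> < 1"
    and "\<forall>\<omega>\<in>space M. ZU \<omega> \<in> unit_circle \<and> ZV \<omega> \<in> unit_circle"
    and "distributed M (arc_measure \<Otimes>\<^sub>M arc_measure) (\<lambda>\<omega>. (ZU \<omega>, ZV \<omega>))
           (\<lambda>(zu, zv). ennreal (bc_density \<psi> zu zv))"
    and "inj_on g1 unit_circle" and "g1 differentiable_on unit_circle"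
    and "inj_on g2 unit_circle" and "g2 differentiable_on unit_circle"
  shows "prob_space.indep_var M borel (\<lambda>\<omega>. g1 (ZU \<omega>)) borel (\<lambda>\<omega>. g2 (ZV \<omega>))
         \<longleftrightarrow> \<psi> = 0"
proof -
  interpret prob_space M by fact
  have "indep_var borel (\<lambda>\<omega>. g1 (ZU \<omega>)) borel (\<lambda>\<omega>. g2 (ZV \<omega>))
      \<longleftrightarrow> indep_var borel ZU borel ZV"
    using assms(3,5-8) compact_unit_circle
    by (intro indep_var_continuous_inj_on_compact_iff)
      (simp_all add: differentiable_imp_continuous_on)
  also have "\<dots> \<longleftrightarrow> indep_var arc_measure ZU arc_measure ZV"
    by (rule indep_var_cong_sets) (simp_all add: sets_arc_measure)
  also have "\<dots> \<longleftrightarrow> (AE p in arc_measure \<Otimes>\<^sub>M arc_measure.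
      ennreal (bc_density \<psi> (fst p) (snd p)) = ennreal (1 / (2 * pi)) * ennreal (1 / (2 * pi)))"
    using distributed_bc_fst_uniform[OF assms(2,4)] distributed_bc_snd_uniform[OF assms(2,4)]
    by (subst indep_var_iff_joint_density[OF sigma_finite_measure_arc_measure
          sigma_finite_measure_arc_measure _ _ assms(4)]) (simp_all add: case_prod_beta)
  also have "\<dots> \<longleftrightarrow>
      (AE p in arc_measure \<Otimes>\<^sub>M arc_measure. bc_density \<psi> (fst p) (snd p) = 1 / (4 * pi^2))"
  proof -
    have "ennreal (1 / (2 * pi)) * ennreal (1 / (2 * pi)) = ennreal (1 / (4 * pi^2))"
      by (simp add: ennreal_mult'[symmetric] power2_eq_square)
    then show ?thesis
      using bc_density_nonneg[OF assms(2)] by (simp add: ennreal_inj)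
  qed
  also have "\<dots> \<longleftrightarrow> \<psi> = 0"
    using assms(2) by (rule bc_density_AE_uniform_iff)
  finally show ?thesis .
qed

end
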